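(* Let $n$ be an even positive integer and $\ell\ge 2$ an integer. Then $\max(n,\ell)=\binom{n}{2}-\frac{n}{2}$ if and only if $\gcd(n-1,\ell)=1$. Moreover, if $n$ is even and $\gcd(n-1,\ell)=1$, then $\overline{M_n}$ is (up to isomorphism) the unique $N$-AW graph of maximum size on $n$ vertices.
   Context: All graphs are finite and simple; $\overline{G}$ is the complement of $G$. Vertex labels lie in $\mathbb{Z}_\ell$. In the neighborhood Lights Out game on $G$, toggling a vertex $v$ adds $1$ (mod $\ell$) to the label of each vertex of the closed neighborhood $N[v]$; the game is won when all labels are $0$. $G$ is $N$-AW if the game can be won from every initial labeling $V(G)\to\mathbb{Z}_\ell$. $\max(n,\ell)$ is the maximum number of edges of an $N$-AW graph on $n$ vertices. For even $n$, $M_n$ denotes a perfect matching on $n$ vertices. *)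

theory Defs
  imports Main
begin

definition simple_graph :: "nat \<Rightarrow> (nat \<Rightarrow> nat \<Rightarrow> bool) \<Rightarrow> bool" where
  "simple_graph n E \<longleftrightarrow>
     (\<forall>u v. E u v \<longrightarrow> u < n \<and> v < n \<and> u \<noteq> v) \<and> (\<forall>u v. E u v \<longrightarrow> E v u)"

definition edges :: "(nat \<Rightarrow> nat \<Rightarrow> bool) \<Rightarrow> nat set set" where
  "edges E = {{u, v} | u v. E u v}"

definition closed_nbhd :: "nat \<Rightarrow> (nat \<Rightarrow> nat \<Rightarrow> bool) \<Rightarrow> nat \<Rightarrow> nat set" where
  "closed_nbhd n E v = {u. u < n \<and> (u = v \<or> E v u)}"

text \<open>Neighborhood Lights Out over Z_l: labels c, toggle counts t (toggling v adds 1
  to every vertex of N[v]); winning means every final label is 0 mod l.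
  The final label of w is c w plus the toggles of all v with w in N[v], i.e. v in N[w].\<close>
definition N_AW :: "nat \<Rightarrow> nat \<Rightarrow> (nat \<Rightarrow> nat \<Rightarrow> bool) \<Rightarrow> bool" where
  "N_AW n l E \<longleftrightarrow>
     (\<forall>c :: nat \<Rightarrow> int. (\<forall>v<n. c v \<in> {0..<int l}) \<longrightarrow>
        (\<exists>t :: nat \<Rightarrow> nat. \<forall>w<n.
           (c w + int (\<Sum>v\<in>{v. v < n \<and> w \<in> closed_nbhd n E v}. t v)) mod int l = 0))"

definition maxAW :: "nat \<Rightarrow> nat \<Rightarrow> nat" where
  "maxAW n l = Max {card (edges E) | E. simple_graph n E \<and> N_AW n l E}"

text \<open>The perfect matching M_n on {0..<n} (n even): edges {2i, 2i+1}; and its complement.\<close>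
definition matching_graph :: "nat \<Rightarrow> nat \<Rightarrow> nat \<Rightarrow> bool" where
  "matching_graph n u v \<longleftrightarrow> u < n \<and> v < n \<and> u \<noteq> v \<and> u div 2 = v div 2"

definition complement :: "nat \<Rightarrow> (nat \<Rightarrow> nat \<Rightarrow> bool) \<Rightarrow> nat \<Rightarrow> nat \<Rightarrow> bool" where
  "complement n E u v \<longleftrightarrow> u < n \<and> v < n \<and> u \<noteq> v \<and> \<not> E u v"

definition graph_iso :: "nat \<Rightarrow> (nat \<Rightarrow> nat \<Rightarrow> bool) \<Rightarrow> (nat \<Rightarrow> nat \<Rightarrow> bool) \<Rightarrow> bool" where
  "graph_iso n E F \<longleftrightarrow> (\<exists>f. bij_betw f {0..<n} {0..<n} \<and>
      (\<forall>u<n. \<forall>v<n. E u v \<longleftrightarrow> F (f u) (f v)))"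

end

theory Submission
  imports Defs
begin

text \<open>An N-AW graph has no two vertices with the same closed neighbourhood: toggles change
  their labels by the same amount, so a label 1 on only one of them can never be cleared.
  Hence the complement H of an N-AW graph with at least C(n,2) - n/2 edges has at most n/2 edges
  and no two vertices with the same neighbourhood; for even n this forces every vertex of H to
  have degree 1, so H is the perfect matching of a fixed-point-free involution \<sigma>.
  In the complement of that matching, toggling v changes every label except that of \<sigma> v, so if
  each v is toggled t v times, T times in total, then vertex w receives T - t (\<sigma> w). Summing
  over all w shows that a single label 1 can only be cleared if n - 1 is invertible modulo l;
  conversely an inverse of n - 1 determines T and then every t v. Any two fixed-point-free
  involutions are conjugate by a permutation, which gives uniqueness up to isomorphism.\<close>

lemma simple_graph_edge:
  assumes "simple_graph n E" "E u v"
  shows "u < n" "v < n" "u \<noteq> v" "E v u"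
  using assms unfolding simple_graph_def by blast+

lemma simple_graph_complement:
  assumes "simple_graph n E"
  shows "simple_graph n (complement n E)"
  using assms unfolding simple_graph_def complement_def by blast

lemma complement_complement:
  assumes "simple_graph n E"
  shows "complement n (complement n E) = E"
  using assms unfolding simple_graph_def complement_def by (intro ext) blast

lemma finite_edges:
  assumes "simple_graph n E"
  shows "finite (edges E)"
proof (rule finite_subset)
  show "edges E \<subseteq> Pow {..<n}"
    using assms unfolding edges_def simple_graph_def by auto
qed simp

lemma finite_neighbours:
  assumes "simple_graph n H"
  shows "finite {x. H v x}"
  using simple_graph_edge(2)[OF assms] by (auto intro: finite_subset[of _ "{..<n}"])

lemma card_edges_add_card_edges_complement:
  assumes "simple_graph n E"
  shows "card (edges E) + card (edges (complement n E)) = n choose 2"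
proof -
  have union: "edges E \<union> edges (complement n E) = {B. B \<subseteq> {..<n} \<and> card B = 2}"
  proof (intro equalityI subsetI)
    fix B assume "B \<in> edges E \<union> edges (complement n E)"
    then obtain u v where "B = {u, v}" "u < n" "v < n" "u \<noteq> v"
      using assms unfolding edges_def complement_def simple_graph_def by blast
    then show "B \<in> {B. B \<subseteq> {..<n} \<and> card B = 2}" by auto
  next
    fix B assume "B \<in> {B. B \<subseteq> {..<n} \<and> card B = 2}"
    then obtain u v where "B = {u, v}" "u \<noteq> v" "u < n" "v < n"
      by (auto simp: card_2_iff)
    then show "B \<in> edges E \<union> edges (complement n E)"
      unfolding edges_def complement_def by blast
  qed
  have disjoint: "edges E \<inter> edges (complement n E) = {}"
    using assms unfolding edges_def complement_def simple_graph_def by (auto simp: doubleton_eq_iff)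
  have "card (edges E) + card (edges (complement n E)) = card {B. B \<subseteq> {..<n} \<and> card B = 2}"
    using card_Un_disjoint[OF finite_edges[OF assms] finite_edges[OF simple_graph_complement[OF assms]] disjoint]
    by (simp add: union)
  also have "\<dots> = n choose 2"
    by (simp add: n_subsets)
  finally show ?thesis .
qed

lemma sum_degree_eq_twice_card_edges:
  assumes "simple_graph n H"
  shows "(\<Sum>v<n. card {x. H v x}) = 2 * card (edges H)"
proof -
  have "card {x. H v x} = card {e \<in> edges H. v \<in> e}" for v
  proof -
    have "{e \<in> edges H. v \<in> e} = (\<lambda>x. {v, x}) ` {x. H v x}"
      using assms unfolding edges_def simple_graph_def by (auto simp: doubleton_eq_iff)
    moreover have "inj_on (\<lambda>x. {v, x}) {x. H v x}"
      by (auto intro!: inj_onI simp: doubleton_eq_iff)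
    ultimately show ?thesis by (simp add: card_image)
  qed
  moreover have "card {v \<in> {..<n}. v \<in> e} = 2" if e: "e \<in> edges H" for e
  proof -
    obtain u w where "e = {u, w}" "H u w"
      using e unfolding edges_def by blast
    then have "{v \<in> {..<n}. v \<in> e} = {u, w}" "u \<noteq> w"
      using simple_graph_edge[OF assms] by auto
    then show ?thesis by simp
  qed
  ultimately show ?thesis
    using sum_multicount[of "{..<n}" "edges H" "\<lambda>v e. v \<in> e" 2] finite_edges[OF assms] by simp
qed

section \<open>Twin-free graphs\<close>

lemma not_N_AW_if_same_closed_nbhd:
  assumes "2 \<le> l" "u < n" "w < n" "u \<noteq> w"
    and same: "{v. v < n \<and> u \<in> closed_nbhd n E v} = {v. v < n \<and> w \<in> closed_nbhd n E v}"
  shows "\<not> N_AW n l E"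
proof
  assume "N_AW n l E"
  \<comment> \<open>u and w receive the same toggles, but only u starts with label 1\<close>
  define c :: "nat \<Rightarrow> int" where "c v = (if v = u then 1 else 0)" for v
  have "\<forall>v<n. c v \<in> {0..<int l}"
    using assms(1) unfolding c_def by auto
  then obtain t
    where t: "\<forall>x<n. (c x + int (\<Sum>v\<in>{v. v < n \<and> x \<in> closed_nbhd n E v}. t v)) mod int l = 0"
    using \<open>N_AW n l E\<close> unfolding N_AW_def by blast
  define s where "s = int (\<Sum>v\<in>{v. v < n \<and> u \<in> closed_nbhd n E v}. t v)"
  have "(1 + s) mod int l = 0" "s mod int l = 0"
    using t[rule_format, OF \<open>u < n\<close>] t[rule_format, OF \<open>w < n\<close>] \<open>u \<noteq> w\<close>
    unfolding s_def c_def same by simp_all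
  then have "1 mod int l = 0"
    by (metis add.right_neutral mod_add_right_eq)
  then show False
    using assms(1) by simp
qed

definition twin_free :: "nat \<Rightarrow> (nat \<Rightarrow> nat \<Rightarrow> bool) \<Rightarrow> bool" where
  "twin_free n H \<longleftrightarrow> (\<forall>u<n. \<forall>w<n. {x. H u x} = {x. H w x} \<longrightarrow> u = w)"

lemma twin_free_complement_if_N_AW:
  assumes "simple_graph n E" "N_AW n l E" "2 \<le> l"
  shows "twin_free n (complement n E)"
  unfolding twin_free_def
proof (intro allI impI; rule ccontr)
  fix u w assume "u < n" "w < n" "u \<noteq> w" and same: "{x. complement n E u x} = {x. complement n E w x}"
  have closed_nbhd_eq:
      "{v. v < n \<and> z \<in> closed_nbhd n E v} = {v. v < n \<and> \<not> complement n E z v}" if "z < n" for z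
    using assms(1) that unfolding closed_nbhd_def complement_def simple_graph_def by auto
  have "{v. v < n \<and> u \<in> closed_nbhd n E v} = {v. v < n \<and> w \<in> closed_nbhd n E v}"
    unfolding closed_nbhd_eq[OF \<open>u < n\<close>] closed_nbhd_eq[OF \<open>w < n\<close>] using same by blast
  then show False
    using not_N_AW_if_same_closed_nbhd assms(2,3) \<open>u < n\<close> \<open>w < n\<close> \<open>u \<noteq> w\<close> by blast
qed

lemma twin_free_high_degree_pair:
  assumes H: "simple_graph n H" "twin_free n H" and "b < n" "2 \<le> card {x. H b x}"
  shows "\<exists>a<n. a \<noteq> b \<and> 2 \<le> card {x. H a x}"
proof (rule ccontr)
  assume low: "\<not> (\<exists>a<n. a \<noteq> b \<and> 2 \<le> card {x. H a x})"
  have "\<not> card {x. H b x} \<le> Suc 0"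
    using assms(4) by simp
  then obtain x y where xy: "H b x" "H b y" "x \<noteq> y"
    unfolding card_le_Suc0_iff_eq[OF finite_neighbours[OF H(1)]] by blast
  have "{z. H a z} = {b}" if "a = x \<or> a = y" for a
  proof -
    have "H a b" "a < n" "a \<noteq> b"
      using that xy simple_graph_edge[OF H(1)] by blast+
    moreover have "card {z. H a z} \<le> Suc 0"
      using low \<open>a < n\<close> \<open>a \<noteq> b\<close> by fastforce
    ultimately show ?thesis
      using card_le_Suc0_iff_eq[OF finite_neighbours[OF H(1)]] by blast
  qed
  then show False
    using H(2) xy simple_graph_edge[OF H(1)] \<open>x \<noteq> y\<close> unfolding twin_free_def by metis
qed

lemma twin_free_card_non_isolated:
  assumes H: "simple_graph n H" "twin_free n H"
  shows "n - 1 \<le> card ({..<n} \<inter> {v. card {x. H v x} \<noteq> 0})"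
proof -
  define A where "A = {..<n} \<inter> {v. card {x. H v x} \<noteq> 0}"
  define Z where "Z = {..<n} \<inter> {v. card {x. H v x} = 0}"
  have Z_unique: "u = w" if "u \<in> Z" "w \<in> Z" for u w
  proof -
    have "{x. H u x} = {}" "{x. H w x} = {}"
      using that finite_neighbours[OF H(1)] unfolding Z_def by auto
    then have "{x. H u x} = {x. H w x}"
      by (simp only:)
    moreover have "u < n" "w < n"
      using that unfolding Z_def by simp_all
    ultimately show ?thesis
      using H(2) unfolding twin_free_def by blast
  qed
  have "finite Z"
    unfolding Z_def by simp
  then have "card Z \<le> 1"
    unfolding One_nat_def card_le_Suc0_iff_eq[OF \<open>finite Z\<close>] using Z_unique by blast
  moreover have "card A + card Z = n"
  proof -
    have "A \<union> Z = {..<n}" "A \<inter> Z = {}"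
      unfolding A_def Z_def by auto
    then show ?thesis
      using card_Un_disjoint[of A Z] unfolding A_def Z_def by simp
  qed
  ultimately show ?thesis
    unfolding A_def by linarith
qed

lemma twin_free_sparse_imp_degree_le_1:
  assumes H: "simple_graph n H" "twin_free n H" and "2 * card (edges H) \<le> n" "v < n"
  shows "card {x. H v x} \<le> 1"
proof -
  define d where "d v = card {x. H v x}" for v
  define B where "B = {..<n} \<inter> {v. 2 \<le> d v}"
  \<comment> \<open>with at most one isolated vertex, a degree sum of at most n leaves room for at most one
    vertex of degree \<ge> 2, but such vertices come in pairs\<close>
  have "card ({..<n} \<inter> {v. d v \<noteq> 0}) + card B
      = (\<Sum>v<n. of_bool (d v \<noteq> 0) + of_bool (2 \<le> d v))"
    unfolding B_def sum.distrib by simp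
  also have "\<dots> \<le> (\<Sum>v<n. d v)"
    by (intro sum_mono) auto
  also have "\<dots> = 2 * card (edges H)"
    unfolding d_def by (rule sum_degree_eq_twice_card_edges[OF H(1)])
  finally have "card B \<le> 1"
    using twin_free_card_non_isolated[OF H] \<open>2 * card (edges H) \<le> n\<close> unfolding d_def by linarith
  have "\<not> 2 \<le> d v"
  proof
    assume "2 \<le> d v"
    then obtain a where "a < n" "a \<noteq> v" "2 \<le> d a"
      using twin_free_high_degree_pair[OF H \<open>v < n\<close>] unfolding d_def by blast
    then have "card {a, v} \<le> card B"
      using \<open>v < n\<close> \<open>2 \<le> d v\<close> unfolding B_def by (intro card_mono) auto
    then show False
      using \<open>card B \<le> 1\<close> \<open>a \<noteq> v\<close> by simp
  qed
  then show ?thesis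
    unfolding d_def by simp
qed

lemma twin_free_sparse_imp_degree_one:
  assumes H: "simple_graph n H" "twin_free n H" and "even n" "2 * card (edges H) \<le> n" "v < n"
  shows "card {x. H v x} = 1"
proof -
  define A where "A = {..<n} \<inter> {v. card {x. H v x} \<noteq> 0}"
  have "(\<Sum>v<n. card {x. H v x}) = (\<Sum>v<n. of_bool (card {x. H v x} \<noteq> 0))"
  proof (intro sum.cong refl)
    fix u assume "u \<in> {..<n}"
    then have "card {x. H u x} \<le> 1"
      using twin_free_sparse_imp_degree_le_1[OF H \<open>2 * card (edges H) \<le> n\<close>] by simp
    then show "card {x. H u x} = of_bool (card {x. H u x} \<noteq> 0)"
      by auto
  qed
  then have "card A = 2 * card (edges H)"
    unfolding A_def sum_degree_eq_twice_card_edges[OF H(1)] by simp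
  moreover have "card A \<le> n"
    unfolding A_def by (metis card_lessThan card_mono finite_lessThan inf_le1)
  moreover have "n - 1 \<le> card A"
    unfolding A_def by (rule twin_free_card_non_isolated[OF H])
  ultimately have "card A = n"
    using \<open>even n\<close> by (elim evenE) presburger
  then have "A = {..<n}"
    unfolding A_def by (intro card_subset_eq) auto
  then have "card {x. H v x} \<noteq> 0"
    using \<open>v < n\<close> unfolding A_def by blast
  then show ?thesis
    using twin_free_sparse_imp_degree_le_1[OF H \<open>2 * card (edges H) \<le> n\<close> \<open>v < n\<close>] by simp
qed

section \<open>Complements of perfect matchings\<close>

definition fpf_involution :: "nat \<Rightarrow> (nat \<Rightarrow> nat) \<Rightarrow> bool" where
  "fpf_involution n \<sigma> \<longleftrightarrow> (\<forall>u<n. \<sigma> u < n \<and> \<sigma> u \<noteq> u \<and> \<sigma> (\<sigma> u) = u)"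

definition matching_of :: "nat \<Rightarrow> (nat \<Rightarrow> nat) \<Rightarrow> nat \<Rightarrow> nat \<Rightarrow> bool" where
  "matching_of n \<sigma> u v \<longleftrightarrow> u < n \<and> v < n \<and> v = \<sigma> u"

lemma simple_graph_matching_of:
  assumes "fpf_involution n \<sigma>"
  shows "simple_graph n (matching_of n \<sigma>)"
  using assms unfolding simple_graph_def matching_of_def fpf_involution_def by metis

lemma bij_betw_fpf_involution:
  assumes "fpf_involution n \<sigma>"
  shows "bij_betw \<sigma> {..<n} {..<n}"
  using assms unfolding fpf_involution_def by (intro bij_betw_byWitness[where f' = \<sigma>]) auto

lemma degree_one_imp_matching_of:
  assumes H: "simple_graph n H" and deg: "\<And>v. v < n \<Longrightarrow> card {x. H v x} = 1"
  shows "\<exists>\<sigma>. fpf_involution n \<sigma> \<and> H = matching_of n \<sigma>"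
proof -
  define \<sigma> where "\<sigma> v = (THE x. H v x)" for v
  have H_iff: "H u x \<longleftrightarrow> x = \<sigma> u" if u: "u < n" for u x
  proof -
    obtain y where y: "{x. H u x} = {y}"
      using deg[OF u] by (metis One_nat_def card_1_singleton_iff)
    then have "\<sigma> u = y"
      unfolding \<sigma>_def by (intro the_equality) auto
    then show ?thesis
      using y by auto
  qed
  have \<sigma>: "\<sigma> u < n" "\<sigma> u \<noteq> u" "\<sigma> (\<sigma> u) = u" if "u < n" for u
  proof -
    have "H u (\<sigma> u)"
      using H_iff[OF \<open>u < n\<close>] by simp
    then have "H (\<sigma> u) u" "\<sigma> u < n"
      using simple_graph_edge[OF H] by blast+
    then show "\<sigma> u < n" "\<sigma> u \<noteq> u" "\<sigma> (\<sigma> u) = u"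
      using H_iff[of "\<sigma> u" u] simple_graph_edge(3)[OF H \<open>H u (\<sigma> u)\<close>] by auto
  qed
  have "fpf_involution n \<sigma>"
    unfolding fpf_involution_def using \<sigma> by blast
  moreover have "H = matching_of n \<sigma>"
  proof (intro ext)
    fix u x
    show "H u x \<longleftrightarrow> matching_of n \<sigma> u x"
      using H_iff[of u x] \<sigma>(1)[of u] simple_graph_edge(1)[OF H, of u x] unfolding matching_of_def by blast
  qed
  ultimately show ?thesis
    by blast
qed

lemma card_edges_matching_of:
  assumes "fpf_involution n \<sigma>"
  shows "2 * card (edges (matching_of n \<sigma>)) = n"
proof -
  have "{x. matching_of n \<sigma> v x} = {\<sigma> v}" if "v < n" for v
    using assms that unfolding matching_of_def fpf_involution_def by auto
  then have "(\<Sum>v<n. card {x. matching_of n \<sigma> v x}) = n"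
    by simp
  then show ?thesis
    using sum_degree_eq_twice_card_edges[OF simple_graph_matching_of[OF assms]] by simp
qed

lemma card_edges_complement_matching_of:
  assumes "fpf_involution n \<sigma>"
  shows "card (edges (complement n (matching_of n \<sigma>))) = (n choose 2) - n div 2"
  using card_edges_add_card_edges_complement[OF simple_graph_matching_of[OF assms]]
    card_edges_matching_of[OF assms] by linarith

lemma N_AW_dense_imp_complement_matching_of:
  assumes E: "simple_graph n E" "N_AW n l E" and "2 \<le> l" "even n"
    and dense: "(n choose 2) - n div 2 \<le> card (edges E)"
  shows "\<exists>\<sigma>. fpf_involution n \<sigma> \<and> E = complement n (matching_of n \<sigma>)"
proof -
  define H where "H = complement n E"
  have H: "simple_graph n H" "twin_free n H"
    unfolding H_def using simple_graph_complement[OF E(1)] twin_free_complement_if_N_AW[OF E \<open>2 \<le> l\<close>]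
    by auto
  have "2 * card (edges H) \<le> n"
    using card_edges_add_card_edges_complement[OF E(1)] dense unfolding H_def by linarith
  then obtain \<sigma> where "fpf_involution n \<sigma>" "H = matching_of n \<sigma>"
    using degree_one_imp_matching_of[OF H(1)] twin_free_sparse_imp_degree_one[OF H \<open>even n\<close>] by blast
  moreover have "E = complement n H"
    unfolding H_def using complement_complement[OF E(1)] by simp
  ultimately show ?thesis
    by blast
qed

lemma card_edges_le_if_N_AW:
  assumes "simple_graph n E" "N_AW n l E" "2 \<le> l" "even n"
  shows "card (edges E) \<le> (n choose 2) - n div 2"
  using N_AW_dense_imp_complement_matching_of[OF assms] card_edges_complement_matching_of
  by (cases "(n choose 2) - n div 2 \<le> card (edges E)") auto

lemma sum_closed_nbhd_complement_matching_of:
  fixes f :: "nat \<Rightarrow> 'a::ab_group_add"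
  assumes "fpf_involution n \<sigma>" "w < n"
  shows "(\<Sum>v\<in>{v. v < n \<and> w \<in> closed_nbhd n (complement n (matching_of n \<sigma>)) v}. f v)
    = (\<Sum>v<n. f v) - f (\<sigma> w)"
proof -
  have "\<sigma> w < n"
    using assms unfolding fpf_involution_def by blast
  have "v < n \<and> w \<in> closed_nbhd n (complement n (matching_of n \<sigma>)) v \<longleftrightarrow> v < n \<and> v \<noteq> \<sigma> w" for v
  proof (cases "v < n")
    case True
    then have "\<sigma> (\<sigma> v) = v" "\<sigma> (\<sigma> w) = w" "\<sigma> w \<noteq> w"
      using assms unfolding fpf_involution_def by blast+
    then show ?thesis
      using True \<open>w < n\<close> unfolding closed_nbhd_def complement_def matching_of_def by auto
  qed simp
  then have "{v. v < n \<and> w \<in> closed_nbhd n (complement n (matching_of n \<sigma>)) v} = {..<n} - {\<sigma> w}"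
    by auto
  with \<open>\<sigma> w < n\<close> show ?thesis
    by (simp add: sum_diff1)
qed

lemma N_AW_complement_matching_of_iff_dvd:
  assumes \<sigma>: "fpf_involution n \<sigma>"
  shows "N_AW n l (complement n (matching_of n \<sigma>)) \<longleftrightarrow>
    (\<forall>c. (\<forall>v<n. c v \<in> {0..<int l}) \<longrightarrow>
      (\<exists>t. \<forall>w<n. int l dvd c w + (\<Sum>v<n. int (t v)) - int (t (\<sigma> w))))"
proof -
  have "int (\<Sum>v\<in>{v. v < n \<and> w \<in> closed_nbhd n (complement n (matching_of n \<sigma>)) v}. t v)
      = (\<Sum>v<n. int (t v)) - int (t (\<sigma> w))" if "w < n" for w and t :: "nat \<Rightarrow> nat"
    unfolding of_nat_sum by (rule sum_closed_nbhd_complement_matching_of[OF \<sigma> that])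
  then show ?thesis
    unfolding N_AW_def dvd_eq_mod_eq_0 by (simp add: add_diff_eq)
qed

lemma coprime_if_N_AW_complement_matching_of:
  assumes \<sigma>: "fpf_involution n \<sigma>" and AW: "N_AW n l (complement n (matching_of n \<sigma>))"
    and "2 \<le> l" "0 < n"
  shows "gcd (n - 1) l = 1"
proof -
  \<comment> \<open>summing the winning conditions for a single label 1 gives l dvd 1 + (n - 1) T\<close>
  define c :: "nat \<Rightarrow> int" where "c v = of_bool (v = 0)" for v
  have "\<forall>v<n. c v \<in> {0..<int l}"
    using \<open>2 \<le> l\<close> unfolding c_def by auto
  then obtain t where t: "\<And>w. w < n \<Longrightarrow> int l dvd c w + (\<Sum>v<n. int (t v)) - int (t (\<sigma> w))"
    using AW unfolding N_AW_complement_matching_of_iff_dvd[OF \<sigma>] by blast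
  define T where "T = (\<Sum>v<n. int (t v))"
  have "int l dvd (\<Sum>w<n. c w + T - int (t (\<sigma> w)))"
    using t unfolding T_def by (intro dvd_sum) simp
  also have "(\<Sum>w<n. c w + T - int (t (\<sigma> w))) = 1 + int (n - 1) * T"
  proof -
    have "(\<Sum>w<n. int (t (\<sigma> w))) = T"
      unfolding T_def using sum.reindex_bij_betw[OF bij_betw_fpf_involution[OF \<sigma>]] by simp
    moreover have "(\<Sum>w<n. c w) = 1"
      using \<open>0 < n\<close> unfolding c_def by simp
    ultimately show ?thesis
      using \<open>0 < n\<close> by (simp add: sum.distrib sum_subtractf algebra_simps)
  qed
  finally have "int (gcd (n - 1) l) dvd 1 + int (n - 1) * T"
    by (metis dvd_trans gcd_dvd2 of_nat_dvd_iff)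
  then have "int (gcd (n - 1) l) dvd 1"
    by (simp add: dvd_add_left_iff)
  then show ?thesis
    by simp
qed

lemma N_AW_complement_matching_of_if_coprime:
  assumes \<sigma>: "fpf_involution n \<sigma>" and "gcd (n - 1) l = 1" "0 < l"
  shows "N_AW n l (complement n (matching_of n \<sigma>))"
  unfolding N_AW_complement_matching_of_iff_dvd[OF \<sigma>]
proof (intro allI impI)
  fix c :: "nat \<Rightarrow> int"
  obtain a b where bezout: "a * int (n - 1) + b * int l = 1"
    using bezout_int[of "int (n - 1)" "int l"] \<open>gcd (n - 1) l = 1\<close> by (metis gcd_int_int_eq of_nat_1)
  define C where "C = (\<Sum>v<n. c v)"
  \<comment> \<open>toggling each v (x v mod l) times leaves vertex w with the label
    c w + (n - 1) (- C a) + (C - c w) = C b l modulo l\<close>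
  define x where "x v = - C * a + c (\<sigma> v)" for v
  define t where "t v = nat (x v mod int l)" for v
  have x_t: "int l dvd x v - int (t v)" for v
    unfolding t_def using \<open>0 < l\<close> by (simp add: dvd_minus_mod)
  have "int l dvd c w + (\<Sum>v<n. int (t v)) - int (t (\<sigma> w))" if "w < n" for w
  proof -
    have "\<sigma> (\<sigma> w) = w"
      using \<sigma> \<open>w < n\<close> unfolding fpf_involution_def by blast
    have "(\<Sum>v<n. c (\<sigma> v)) = C"
      unfolding C_def using sum.reindex_bij_betw[OF bij_betw_fpf_involution[OF \<sigma>]] by simp
    then have "(\<Sum>v<n. x v) = C - int n * C * a"
      unfolding x_def sum.distrib by simp
    then have "c w + (\<Sum>v<n. x v) - x (\<sigma> w) = C - int (n - 1) * C * a"
      using \<open>w < n\<close> \<open>\<sigma> (\<sigma> w) = w\<close> unfolding x_def by (simp add: of_nat_diff algebra_simps)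
    also have "\<dots> = C * (1 - a * int (n - 1))"
      by (simp add: algebra_simps)
    also have "\<dots> = C * b * int l"
      using bezout by (metis add_diff_cancel_left' mult.assoc)
    finally have eq: "c w + (\<Sum>v<n. int (t v)) - int (t (\<sigma> w))
        = C * b * int l - (\<Sum>v<n. x v - int (t v)) + (x (\<sigma> w) - int (t (\<sigma> w)))"
      by (simp add: sum_subtractf algebra_simps)
    have "int l dvd (\<Sum>v<n. x v - int (t v))"
      using x_t by (simp add: dvd_sum)
    then show ?thesis
      unfolding eq by (intro dvd_add[OF dvd_diff x_t]) simp_all
  qed
  then show "\<exists>t. \<forall>w<n. int l dvd c w + (\<Sum>v<n. int (t v)) - int (t (\<sigma> w))"
    by blast
qed

lemma N_AW_complement_matching_of_iff_coprime:
  assumes "fpf_involution n \<sigma>" "2 \<le> l" "0 < n"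
  shows "N_AW n l (complement n (matching_of n \<sigma>)) \<longleftrightarrow> gcd (n - 1) l = 1"
proof -
  have "0 < l"
    using \<open>2 \<le> l\<close> by simp
  show ?thesis
    using coprime_if_N_AW_complement_matching_of[OF assms(1) _ assms(2,3)]
      N_AW_complement_matching_of_if_coprime[OF assms(1) _ \<open>0 < l\<close>] by (rule iffI)
qed

section \<open>Isomorphism with the complement of M_n\<close>

definition matching_partner :: "nat \<Rightarrow> nat" where
  "matching_partner u = (if even u then u + 1 else u - 1)"

lemma fpf_involution_matching_partner:
  assumes "even n"
  shows "fpf_involution n matching_partner"
  unfolding fpf_involution_def
proof (intro allI impI)
  fix u assume "u < n"
  show "matching_partner u < n \<and> matching_partner u \<noteq> u \<and> matching_partner (matching_partner u) = u"
  proof (cases "even u")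
    case True
    then have "u + 1 < n"
      using \<open>u < n\<close> \<open>even n\<close> by (metis Suc_eq_plus1 Suc_lessI even_Suc)
    then show ?thesis
      using True unfolding matching_partner_def by simp
  next
    case False
    then have "0 < u"
      by (metis even_zero gr0I)
    then show ?thesis
      using False \<open>u < n\<close> unfolding matching_partner_def by auto
  qed
qed

lemma matching_graph_eq_matching_of: "matching_graph n = matching_of n matching_partner"
proof (intro ext)
  fix u v
  have div_2_eq: "w div 2 = k \<longleftrightarrow> w = 2 * k \<or> w = 2 * k + 1" for w k :: nat
  proof
    assume "w div 2 = k"
    moreover have "w = 2 * (w div 2) + w mod 2" "w mod 2 < 2"
      by simp_all
    ultimately show "w = 2 * k \<or> w = 2 * k + 1"
      by linarith
  qed auto
  have "u div 2 = v div 2 \<and> u \<noteq> v \<longleftrightarrow> v = matching_partner u"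
    using div_2_eq[of u "u div 2"] div_2_eq[of v "u div 2"] odd_pos[of u]
    unfolding matching_partner_def by auto
  then show "matching_graph n u v = matching_of n matching_partner u v"
    unfolding matching_graph_def matching_of_def by blast
qed

lemma simple_graph_complement_matching_graph:
  assumes "even n"
  shows "simple_graph n (complement n (matching_graph n))"
  unfolding matching_graph_eq_matching_of
  by (rule simple_graph_complement[OF simple_graph_matching_of[OF fpf_involution_matching_partner[OF assms]]])

lemma card_edges_complement_matching_graph:
  assumes "even n"
  shows "card (edges (complement n (matching_graph n))) = (n choose 2) - n div 2"
  unfolding matching_graph_eq_matching_of
  by (rule card_edges_complement_matching_of[OF fpf_involution_matching_partner[OF assms]])

lemma N_AW_complement_matching_graph_iff_coprime:
  assumes "even n" "2 \<le> l" "0 < n"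
  shows "N_AW n l (complement n (matching_graph n)) \<longleftrightarrow> gcd (n - 1) l = 1"
  unfolding matching_graph_eq_matching_of
  by (rule N_AW_complement_matching_of_iff_coprime[OF fpf_involution_matching_partner[OF assms(1)] assms(2,3)])

lemma card_fpf_involution:
  assumes \<sigma>: "fpf_involution n \<sigma>"
  shows "n = 2 * card {u. u < n \<and> u < \<sigma> u}"
proof -
  define R where "R = {u. u < n \<and> u < \<sigma> u}"
  have \<sigma>_props: "\<sigma> u < n" "\<sigma> u \<noteq> u" "\<sigma> (\<sigma> u) = u" if "u < n" for u
    using \<sigma> that unfolding fpf_involution_def by blast+
  have "{..<n} = R \<union> \<sigma> ` R"
  proof (intro equalityI subsetI)
    fix u assume "u \<in> {..<n}"
    then have "u < n" by simp
    show "u \<in> R \<union> \<sigma> ` R"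
    proof (cases "u < \<sigma> u")
      case True
      then show ?thesis
        using \<open>u < n\<close> unfolding R_def by blast
    next
      case False
      then have "\<sigma> u \<in> R"
        using \<sigma>_props[OF \<open>u < n\<close>] unfolding R_def by simp
      then show ?thesis
        using \<sigma>_props(3)[OF \<open>u < n\<close>] by (metis UnI2 imageI)
    qed
  next
    fix u assume "u \<in> R \<union> \<sigma> ` R"
    then show "u \<in> {..<n}"
      unfolding R_def using \<sigma>_props(1) by blast
  qed
  moreover have "R \<inter> \<sigma> ` R = {}"
  proof -
    have "\<sigma> v \<notin> R" if "v \<in> R" for v
      using that \<sigma>_props(3)[of v] unfolding R_def by simp
    then show ?thesis
      by blast
  qed
  moreover have "card (\<sigma> ` R) = card R"
    by (intro card_image inj_on_inverseI[where g = \<sigma>]) (simp add: R_def \<sigma>_props(3))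
  moreover have "finite R"
    unfolding R_def by simp
  ultimately have "n = 2 * card R"
    using card_Un_disjoint[of R "\<sigma> ` R"] by (metis card_lessThan finite_imageI mult_2)
  then show ?thesis
    unfolding R_def .
qed

lemma fpf_involution_conj_matching_partner:
  assumes \<sigma>: "fpf_involution n \<sigma>"
  shows "\<exists>f. bij_betw f {..<n} {..<n} \<and> (\<forall>u<n. f (\<sigma> u) = matching_partner (f u))"
proof -
  define R where "R = {u. u < n \<and> u < \<sigma> u}"
  have n_eq: "n = 2 * card R"
    using card_fpf_involution[OF \<sigma>] unfolding R_def .
  obtain idx where idx: "bij_betw idx R {0..<card R}"
    using ex_bij_betw_finite_nat[of R] unfolding R_def by auto
  have \<sigma>_props: "\<sigma> u < n" "\<sigma> u \<noteq> u" "\<sigma> (\<sigma> u) = u" if "u < n" for u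
    using \<sigma> that unfolding fpf_involution_def by blast+
  have in_R: "(if u < \<sigma> u then u else \<sigma> u) \<in> R" if "u < n" for u
    using \<sigma>_props[OF that] that unfolding R_def by auto
  \<comment> \<open>the i-th pair {u, \<sigma> u} with u < \<sigma> u is mapped to {2 i, 2 i + 1}\<close>
  define f where "f u = (if u < \<sigma> u then 2 * idx u else 2 * idx (\<sigma> u) + 1)" for u
  define g where "g k = (if even k then inv_into R idx (k div 2) else \<sigma> (inv_into R idx (k div 2)))" for k
  have "g (f u) = u" if "u < n" for u
    using in_R[OF that] \<sigma>_props(3)[OF that] bij_betw_imp_inj_on[OF idx]
    unfolding f_def g_def by (cases "u < \<sigma> u") simp_all
  then have "inj_on f {..<n}"
    by (intro inj_on_inverseI[where g = g]) simp
  moreover have "f u < n" if "u < n" for u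
    using bij_betw_apply[OF idx in_R[OF that]] n_eq unfolding f_def by (cases "u < \<sigma> u") simp_all
  ultimately have "bij_betw f {..<n} {..<n}"
    unfolding bij_betw_def by (simp add: endo_inj_surj image_subset_iff)
  moreover have "f (\<sigma> u) = matching_partner (f u)" if "u < n" for u
    using \<sigma>_props[OF that] \<sigma>_props(2)[OF \<sigma>_props(1)[OF that]] unfolding f_def matching_partner_def
    by (cases "u < \<sigma> u") auto
  ultimately show ?thesis
    by blast
qed

lemma graph_iso_matching_of:
  assumes "fpf_involution n \<sigma>"
  shows "graph_iso n (matching_of n \<sigma>) (matching_graph n)"
proof -
  obtain f where f: "bij_betw f {..<n} {..<n}" "\<And>u. u < n \<Longrightarrow> f (\<sigma> u) = matching_partner (f u)"
    using fpf_involution_conj_matching_partner[OF assms] by blast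
  have "matching_of n \<sigma> u v \<longleftrightarrow> matching_of n matching_partner (f u) (f v)" if "u < n" "v < n" for u v
  proof -
    have "\<sigma> u < n"
      using assms that(1) unfolding fpf_involution_def by blast
    then have "v = \<sigma> u \<longleftrightarrow> f v = f (\<sigma> u)"
      using bij_betw_imp_inj_on[OF f(1)] that(2) by (auto dest: inj_onD)
    then show ?thesis
      using that f bij_betw_apply[OF f(1)] unfolding matching_of_def by auto
  qed
  then show ?thesis
    using f(1) unfolding graph_iso_def matching_graph_eq_matching_of atLeast0LessThan by blast
qed

lemma graph_iso_complement:
  assumes "graph_iso n E F"
  shows "graph_iso n (complement n E) (complement n F)"
proof -
  obtain f where f: "bij_betw f {0..<n} {0..<n}" and EF: "\<forall>u<n. \<forall>v<n. E u v \<longleftrightarrow> F (f u) (f v)"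
    using assms unfolding graph_iso_def by blast
  have "complement n E u v \<longleftrightarrow> complement n F (f u) (f v)" if "u < n" "v < n" for u v
    using that EF bij_betw_apply[OF f] bij_betw_imp_inj_on[OF f]
    unfolding complement_def by (auto dest: inj_onD)
  then show ?thesis
    using f unfolding graph_iso_def by blast
qed

lemma coprime_if_N_AW_extremal:
  assumes E: "simple_graph n E" "N_AW n l E" and "2 \<le> l" "even n" "0 < n"
    and "card (edges E) = (n choose 2) - n div 2"
  shows "gcd (n - 1) l = 1"
proof -
  obtain \<sigma> where \<sigma>: "fpf_involution n \<sigma>" and E_eq: "E = complement n (matching_of n \<sigma>)"
    using N_AW_dense_imp_complement_matching_of[OF E \<open>2 \<le> l\<close> \<open>even n\<close>] assms(6) by auto
  show ?thesis
    using coprime_if_N_AW_complement_matching_of[OF \<sigma> _ \<open>2 \<le> l\<close> \<open>0 < n\<close>] E(2) unfolding E_eq .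
qed

lemma graph_iso_if_N_AW_extremal:
  assumes E: "simple_graph n E" "N_AW n l E" and "2 \<le> l" "even n"
    and "card (edges E) = (n choose 2) - n div 2"
  shows "graph_iso n E (complement n (matching_graph n))"
proof -
  obtain \<sigma> where \<sigma>: "fpf_involution n \<sigma>" and E_eq: "E = complement n (matching_of n \<sigma>)"
    using N_AW_dense_imp_complement_matching_of[OF E \<open>2 \<le> l\<close> \<open>even n\<close>] assms(5) by auto
  show ?thesis
    unfolding E_eq by (rule graph_iso_complement[OF graph_iso_matching_of[OF \<sigma>]])
qed

section \<open>The maximum size\<close>

lemma N_AW_empty_graph:
  assumes "0 < l"
  shows "N_AW n l (\<lambda>_ _. False)"
  unfolding N_AW_def
proof (intro allI impI)
  fix c :: "nat \<Rightarrow> int"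
  define t where "t w = nat (- c w mod int l)" for w
  have "{v. v < n \<and> w \<in> closed_nbhd n (\<lambda>_ _. False) v} = {w}" if "w < n" for w
    using that unfolding closed_nbhd_def by auto
  moreover have "(c w + int (t w)) mod int l = 0" for w
    unfolding t_def using assms by (simp add: mod_add_right_eq)
  ultimately show "\<exists>t. \<forall>w<n.
      (c w + int (\<Sum>v\<in>{v. v < n \<and> w \<in> closed_nbhd n (\<lambda>_ _. False) v}. t v)) mod int l = 0"
    by (intro exI[of _ t]) simp
qed

lemma finite_card_edges_N_AW:
  "finite {card (edges E) | E. simple_graph n E \<and> N_AW n l E}"
proof (rule finite_subset)
  show "{card (edges E) | E. simple_graph n E \<and> N_AW n l E} \<subseteq> {..n choose 2}"
    using card_edges_add_card_edges_complement by fastforce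
qed simp

lemma card_edges_le_maxAW:
  assumes "simple_graph n E" "N_AW n l E"
  shows "card (edges E) \<le> maxAW n l"
  unfolding maxAW_def using assms by (intro Max_ge[OF finite_card_edges_N_AW]) blast

lemma maxAW_attained:
  assumes "0 < l"
  shows "\<exists>E. simple_graph n E \<and> N_AW n l E \<and> card (edges E) = maxAW n l"
proof -
  have "simple_graph n (\<lambda>_ _. False)"
    unfolding simple_graph_def by simp
  then have "{card (edges E) | E. simple_graph n E \<and> N_AW n l E} \<noteq> {}"
    using N_AW_empty_graph[OF assms] by blast
  from Max_in[OF finite_card_edges_N_AW this] obtain E
    where "maxAW n l = card (edges E)" "simple_graph n E" "N_AW n l E"
    unfolding maxAW_def by blast
  then show ?thesis
    by metis
qed

lemma maxAW_le:
  assumes "2 \<le> l" "even n"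
  shows "maxAW n l \<le> (n choose 2) - n div 2"
proof -
  obtain E where E: "simple_graph n E" "N_AW n l E" "card (edges E) = maxAW n l"
    using maxAW_attained[of l n] \<open>2 \<le> l\<close> by auto
  show ?thesis
    using card_edges_le_if_N_AW[OF E(1,2) assms] E(3) by simp
qed

lemma maxAW_eq_iff_coprime:
  assumes "even n" "0 < n" "2 \<le> l"
  shows "maxAW n l = (n choose 2) - n div 2 \<longleftrightarrow> gcd (n - 1) l = 1"
proof
  obtain E where E: "simple_graph n E" "N_AW n l E" "card (edges E) = maxAW n l"
    using maxAW_attained[of l n] \<open>2 \<le> l\<close> by auto
  assume "maxAW n l = (n choose 2) - n div 2"
  with E show "gcd (n - 1) l = 1"
    using coprime_if_N_AW_extremal[OF E(1,2) \<open>2 \<le> l\<close> \<open>even n\<close> \<open>0 < n\<close>] by simp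
next
  assume "gcd (n - 1) l = 1"
  then have "card (edges (complement n (matching_graph n))) \<le> maxAW n l"
    using card_edges_le_maxAW simple_graph_complement_matching_graph[OF \<open>even n\<close>]
      N_AW_complement_matching_graph_iff_coprime[OF assms(1,3,2)] by simp
  then show "maxAW n l = (n choose 2) - n div 2"
    using card_edges_complement_matching_graph[OF \<open>even n\<close>] maxAW_le[OF \<open>2 \<le> l\<close> \<open>even n\<close>] by simp
qed

theorem proposition4p3:
  fixes n l :: nat
  assumes "even n" and "n > 0" and "l \<ge> 2"
  shows "(maxAW n l = (n choose 2) - n div 2 \<longleftrightarrow> gcd (n - 1) l = 1)
    \<and> (gcd (n - 1) l = 1 \<longrightarrow>
        simple_graph n (complement n (matching_graph n))
        \<and> N_AW n l (complement n (matching_graph n))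
        \<and> card (edges (complement n (matching_graph n))) = maxAW n l
        \<and> (\<forall>E. simple_graph n E \<and> N_AW n l E \<and> card (edges E) = maxAW n l
               \<longrightarrow> graph_iso n E (complement n (matching_graph n))))"
proof (intro conjI impI allI)
  show "maxAW n l = (n choose 2) - n div 2 \<longleftrightarrow> gcd (n - 1) l = 1"
    by (rule maxAW_eq_iff_coprime[OF assms])
  assume coprime: "gcd (n - 1) l = 1"
  then have max_eq: "maxAW n l = (n choose 2) - n div 2"
    using maxAW_eq_iff_coprime[OF assms] by simp
  show "simple_graph n (complement n (matching_graph n))"
    by (rule simple_graph_complement_matching_graph[OF \<open>even n\<close>])
  show "N_AW n l (complement n (matching_graph n))"
    using N_AW_complement_matching_graph_iff_coprime[OF \<open>even n\<close> \<open>2 \<le> l\<close> \<open>0 < n\<close>] coprime by simp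
  show "card (edges (complement n (matching_graph n))) = maxAW n l"
    unfolding max_eq by (rule card_edges_complement_matching_graph[OF \<open>even n\<close>])
  fix E assume "simple_graph n E \<and> N_AW n l E \<and> card (edges E) = maxAW n l"
  then show "graph_iso n E (complement n (matching_graph n))"
    using graph_iso_if_N_AW_extremal[OF _ _ \<open>2 \<le> l\<close> \<open>even n\<close>] max_eq by simp
qed

end
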